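(* Assume the predecessor sets are consecutive, i.e. $\pi_C(j)=\{j-I_j,\dots,j-1\}$ for all $j$, so that $\psi_C(j)=\{1,\dots,C\}$ for $j\le C$ and $\psi_C(j)=\{j-C+1,\dots,j\}$ for $j\ge C$. Then for every $j\in\{1,\dots,J\}$ the principal submatrices indexed by the blocks $\psi_C(j)$ coincide: $$\big(\mathbf S_C^{-1}\big)_{[\psi_C(j),\psi_C(j)]}=\big(\mathbf K_{\mathbf A\mathbf A}\big)_{[\psi_C(j),\psi_C(j)]},$$ so that the block band-diagonals $-C+1,\dots,C-1$ of $\mathbf S_C^{-1}$ and $\mathbf K_{\mathbf A\mathbf A}$ agree. In particular, for $C=J$, $\mathbf S_J^{-1}=\mathbf K_{\mathbf A\mathbf A}$.
   Context: Let $k:\mathbb R^D\times\mathbb R^D\to\mathbb R$ be a positive definite kernel. For matrices $\mathbf U\in\mathbb R^{m\times D}$, $\mathbf W\in\mathbb R^{n\times D}$ whose rows are points of $\mathbb R^D$, $\mathbf K_{\mathbf U\mathbf W}\in\mathbb R^{m\times n}$ has entries $k(U_i,W_l)$. All kernel matrices that are inverted below are assumed invertible. Inducing inputs: fix $J\ge1$, $L\ge1$, $\mathbf A_j\in\mathbb R^{L\times D}$, $\mathbf A=(\mathbf A_1;\dots;\mathbf A_J)$, $M=LJ$. For $\varphi\subseteq\{1,\dots,J\}$ listed increasingly as $\varphi^1<\varphi^2<\cdots$, $\mathbf A_\varphi$ denotes the vertical stack of the corresponding blocks; for an $M\times M$ matrix $\mathbf Z$ viewed as $J\times J$ blocks of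 size $L\times L$, $\mathbf Z_{[\varphi,\varphi]}$ is the submatrix of block rows and columns in $\varphi$. Predecessor and correlation sets: for each $C\in\{1,\dots,J\}$ and $j\in\{1,\dots,J\}$ a set $\pi_C(j)\subseteq\{1,\dots,j-1\}$ with $|\pi_C(j)|=I_j:=\min(j-1,C-1)$; the correlation set is $\psi_C(j)=\pi_C(j)\cup\{j,\dots,C\}$ if $j<C$ and $\psi_C(j)=\pi_C(j)\cup\{j\}$ if $j\ge C$. Write $\pi(j)=\pi_C(j)$ when $C$ is fixed. Matrices (for fixed $C$): $\mathbf F_j=\mathbf K_{\mathbf A_j\mathbf A_{\pi(j)}}\mathbf K_{\mathbf A_{\pi(j)}\mathbf A_{\pi(j)}}^{-1}\in\mathbb R^{L\times LI_j}$; $\mathbf Q_j=\mathbf K_{\mathbf A_j\mathbf A_j}-\mathbf K_{\mathbf A_j\mathbf A_{\pi(j)}}\mathbf K_{\mathbf A_{\pi(j)}\mathbf A_{\pi(j)}}^{-1}\mathbf K_{\mathbf A_{\pi(j)}\mathbf A_j}$; if $\pi(j)=\emptyset$ then $\mathbf F_j$ is empty and $\mathbf Q_j=\mathbf K_{\mathbf A_j\mathbf A_j}$. Partition $\mathbf F_j=[\mathbf F_j^1,\dots,\mathbf F_j^{I_j}]$ into $L\times L$ blocks, $\mathbf F_j^i$ corresponding to $\pi^i(j)$. $\mathbf Q=\mathrm{blockdiag}(\mathbf Q_1,\dots,\mathbf Q_J)$; $\mathbf F\in\mathbb R^{M\times M}$ is the $J\times J$ block matrix with $\mathbb I_L$ in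 each diagonal block, $-\mathbf F_j^i$ in block $(j,\pi^i(j))$ and zero elsewhere; $\mathbf S_C=\mathbf F^T\mathbf Q^{-1}\mathbf F$ (the precision matrix of the CPoE prior $q_C(\mathbf a)=\prod_j\mathcal N(\mathbf a_j;\mathbf F_j\mathbf a_{\pi(j)},\mathbf Q_j)$). *)

theory Defs
  imports "HOL-Analysis.Analysis" "Jordan_Normal_Form.Matrix"
begin

text \<open>Inducing inputs are given as a row function A :: nat => real^'d,
  row r (0-based) of the M x D matrix, M = L*J. Block j (1-based, 1 <= j <= J) consists of
  rows (j-1)*L ..< j*L.\<close>

definition pos_def_kernel :: "('a \<Rightarrow> 'a \<Rightarrow> real) \<Rightarrow> bool" where
  "pos_def_kernel k \<longleftrightarrow> (\<forall>x y. k x y = k y x) \<and>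
     (\<forall>(xs :: 'a list) (c :: nat \<Rightarrow> real).
        (\<Sum>i<length xs. \<Sum>l<length xs. c i * c l * k (xs ! i) (xs ! l)) \<ge> 0)"

definition minv :: "real mat \<Rightarrow> real mat" where
  "minv X = (SOME Y. inverts_mat X Y \<and> inverts_mat Y X)"

definition blockrows :: "nat \<Rightarrow> nat set \<Rightarrow> nat list" where
  "blockrows L \<phi> = concat (map (\<lambda>j. [(j - 1) * L ..< j * L]) (sorted_list_of_set \<phi>))"

definition kmat :: "('a \<Rightarrow> 'a \<Rightarrow> real) \<Rightarrow> (nat \<Rightarrow> 'a) \<Rightarrow> nat list \<Rightarrow> nat list \<Rightarrow> real mat" where
  "kmat k A us ws = mat (length us) (length ws) (\<lambda>(a, b). k (A (us ! a)) (A (ws ! b)))"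

definition Kblk :: "('a \<Rightarrow> 'a \<Rightarrow> real) \<Rightarrow> (nat \<Rightarrow> 'a) \<Rightarrow> nat \<Rightarrow> nat set \<Rightarrow> nat set \<Rightarrow> real mat" where
  "Kblk k A L \<phi> \<theta> = kmat k A (blockrows L \<phi>) (blockrows L \<theta>)"

definition KAA :: "('a \<Rightarrow> 'a \<Rightarrow> real) \<Rightarrow> (nat \<Rightarrow> 'a) \<Rightarrow> nat \<Rightarrow> nat \<Rightarrow> real mat" where
  "KAA k A L J = Kblk k A L {1..J} {1..J}"

definition subblk :: "nat \<Rightarrow> nat set \<Rightarrow> real mat \<Rightarrow> real mat" where
  "subblk L \<phi> Z = (let idx = blockrows L \<phi> in
     mat (length idx) (length idx) (\<lambda>(a, b). Z $$ (idx ! a, idx ! b)))"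

definition Fj :: "('a \<Rightarrow> 'a \<Rightarrow> real) \<Rightarrow> (nat \<Rightarrow> 'a) \<Rightarrow> nat \<Rightarrow> (nat \<Rightarrow> nat set) \<Rightarrow> nat \<Rightarrow> real mat" where
  "Fj k A L \<pi> j = Kblk k A L {j} (\<pi> j) * minv (Kblk k A L (\<pi> j) (\<pi> j))"

definition Qj :: "('a \<Rightarrow> 'a \<Rightarrow> real) \<Rightarrow> (nat \<Rightarrow> 'a) \<Rightarrow> nat \<Rightarrow> (nat \<Rightarrow> nat set) \<Rightarrow> nat \<Rightarrow> real mat" where
  "Qj k A L \<pi> j = Kblk k A L {j} {j}
     - Kblk k A L {j} (\<pi> j) * minv (Kblk k A L (\<pi> j) (\<pi> j)) * Kblk k A L (\<pi> j) {j}"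

definition Qmat :: "('a \<Rightarrow> 'a \<Rightarrow> real) \<Rightarrow> (nat \<Rightarrow> 'a) \<Rightarrow> nat \<Rightarrow> nat \<Rightarrow> (nat \<Rightarrow> nat set) \<Rightarrow> real mat" where
  "Qmat k A L J \<pi> = mat (L * J) (L * J) (\<lambda>(r, c).
     if r div L = c div L then Qj k A L \<pi> (r div L + 1) $$ (r mod L, c mod L) else 0)"

text \<open>F: identity diagonal blocks, -F_j^i in block (j, pi^i(j)), where pi^i(j) is the
  i-th smallest element of pi(j); the 0-based position of block b in pi(j) is
  card {i in pi(j). i < b}.\<close>
definition Fmat :: "('a \<Rightarrow> 'a \<Rightarrow> real) \<Rightarrow> (nat \<Rightarrow> 'a) \<Rightarrow> nat \<Rightarrow> nat \<Rightarrow> (nat \<Rightarrow> nat set) \<Rightarrow> real mat" where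
  "Fmat k A L J \<pi> = mat (L * J) (L * J) (\<lambda>(r, c).
     (let jr = r div L + 1; jc = c div L + 1 in
      if jr = jc then (if r = c then 1 else 0)
      else if jc \<in> \<pi> jr then
        - (Fj k A L \<pi> jr $$ (r mod L, card {i \<in> \<pi> jr. i < jc} * L + c mod L))
      else 0))"

definition Smat :: "('a \<Rightarrow> 'a \<Rightarrow> real) \<Rightarrow> (nat \<Rightarrow> 'a) \<Rightarrow> nat \<Rightarrow> nat \<Rightarrow> (nat \<Rightarrow> nat set) \<Rightarrow> real mat" where
  "Smat k A L J \<pi> = transpose_mat (Fmat k A L J \<pi>) * minv (Qmat k A L J \<pi>) * Fmat k A L J \<pi>"

definition Ij :: "nat \<Rightarrow> nat \<Rightarrow> nat" where
  "Ij C j = min (j - 1) (C - 1)"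

definition pi_consec :: "nat \<Rightarrow> nat \<Rightarrow> nat set" where
  "pi_consec C j = {j - Ij C j ..< j}"

definition psi :: "nat \<Rightarrow> (nat \<Rightarrow> nat set) \<Rightarrow> nat \<Rightarrow> nat set" where
  "psi C \<pi> j = (if j < C then \<pi> j \<union> {j..C} else \<pi> j \<union> {j})"

end

(*
  Let G = S_C^-1 = F^-1 Q F^-T. Since F is block unit lower triangular, so is F^-1, hence on and
  below the block diagonal the matrix F G = Q F^-T agrees with the block-diagonal Q: it vanishes
  strictly below the diagonal and equals Q_j on the diagonal block j. Read row by row, this
  expresses every entry of G in block row j whose block column lies within distance C - 1 through
  entries in the predecessor block rows pi(j) = {j - C + 1, ..., j - 1}, and the identities
  F_j K_pi,pi = K_j,pi and Q_j + F_j K_pi,j = K_jj say that the kernel matrix obeys the same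
  recursion. Induction on the larger block index, using the transposed recursion for entries
  above the diagonal, gives G = K_AA on this band, which contains every psi_C(j) x psi_C(j).
*)
theory Submission
  imports Defs "Jordan_Normal_Form.Determinant"
begin

lemma index_mult_mat_sum:
  fixes X Y :: "real mat"
  assumes "X \<in> carrier_mat a b" "Y \<in> carrier_mat b c" "i < a" "j < c"
  shows "(X * Y) $$ (i,j) = (\<Sum>s<b. X $$ (i,s) * Y $$ (s,j))"
  using assms by (auto simp: scalar_prod_def lessThan_atLeast0 intro!: sum.cong)

lemma minv_carrier_inverse:
  fixes X :: "real mat"
  assumes X: "X \<in> carrier_mat N N" and inv: "invertible_mat X"
  shows "minv X \<in> carrier_mat N N" "X * minv X = 1\<^sub>m N" "minv X * X = 1\<^sub>m N"
proof -
  have "\<exists>Y. inverts_mat X Y \<and> inverts_mat Y X" using inv unfolding invertible_mat_def by blast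
  then have "inverts_mat X (minv X) \<and> inverts_mat (minv X) X"
    unfolding minv_def by (rule someI_ex)
  then have XY: "X * minv X = 1\<^sub>m N" and YX: "minv X * X = 1\<^sub>m (dim_row (minv X))"
    using X unfolding inverts_mat_def by auto
  have "dim_col (minv X) = N" using arg_cong[OF XY, of dim_col] X by simp
  moreover have "dim_row (minv X) = N" using arg_cong[OF YX, of dim_col] X by simp
  ultimately show "minv X \<in> carrier_mat N N" "X * minv X = 1\<^sub>m N" "minv X * X = 1\<^sub>m N"
    using XY YX by auto
qed

lemma div_eq_iff_in_block:
  fixes q r L :: nat
  assumes "0 < L"
  shows "r div L = q \<longleftrightarrow> q * L \<le> r \<and> r < (q + 1) * L"
  using less_eq_div_iff_mult_less_eq[OF assms, of q r] div_less_iff_less_mult[OF assms, of r "q+1"]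
  by auto

subsection \<open>Block-diagonal matrices\<close>

definition blockdiag_mat :: "nat \<Rightarrow> nat \<Rightarrow> (nat \<Rightarrow> real mat) \<Rightarrow> real mat" where
  "blockdiag_mat L J D = mat (L*J) (L*J)
     (\<lambda>(r,c). if r div L = c div L then D (r div L) $$ (r mod L, c mod L) else 0)"

lemma blockdiag_mat_carrier: "blockdiag_mat L J D \<in> carrier_mat (L*J) (L*J)"
  unfolding blockdiag_mat_def by (rule mat_carrier)

lemma blockdiag_mat_mult:
  assumes L0: "0 < L"
    and D: "\<And>b. b < J \<Longrightarrow> D b \<in> carrier_mat L L"
    and E: "\<And>b. b < J \<Longrightarrow> E b \<in> carrier_mat L L"
  shows "blockdiag_mat L J D * blockdiag_mat L J E = blockdiag_mat L J (\<lambda>b. D b * E b)"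
proof (rule eq_matI)
  fix r c assume "r < dim_row (blockdiag_mat L J (\<lambda>b. D b * E b))"
    "c < dim_col (blockdiag_mat L J (\<lambda>b. D b * E b))"
  then have r: "r < L*J" and c: "c < L*J" unfolding blockdiag_mat_def by simp_all
  define b where "b = r div L"
  then have rb: "r div L = b" by simp
  have bJ: "b < J" unfolding b_def using r L0 by (simp add: div_less_iff_less_mult mult.commute)
  have bL: "b*L + L \<le> L*J" using bJ
    by (metis add.commute mult.commute mult_Suc_right Suc_leI mult_le_mono2)
  let ?BD = "blockdiag_mat L J D" and ?BE = "blockdiag_mat L J E"
  have "(?BD * ?BE) $$ (r,c) = (\<Sum>t<L*J. ?BD $$ (r,t) * ?BE $$ (t,c))"
    by (rule index_mult_mat_sum[OF blockdiag_mat_carrier blockdiag_mat_carrier r c])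
  also have "\<dots> = (\<Sum>t\<in>{b*L..<b*L+L}. ?BD $$ (r,t) * ?BE $$ (t,c))"
  proof (rule sum.mono_neutral_right)
    show "\<forall>t\<in>{..<L*J} - {b*L..<b*L+L}. ?BD $$ (r,t) * ?BE $$ (t,c) = 0"
    proof
      fix t assume t: "t \<in> {..<L*J} - {b*L..<b*L+L}"
      then have "t div L \<noteq> b" using div_eq_iff_in_block[OF L0, of t b] by auto
      then show "?BD $$ (r,t) * ?BE $$ (t,c) = 0" unfolding blockdiag_mat_def b_def using t r by auto
    qed
    show "{b*L..<b*L+L} \<subseteq> {..<L*J}" using bL by auto
  qed simp
  also have "\<dots> = (\<Sum>s<L. ?BD $$ (r, b*L + s) * ?BE $$ (b*L + s, c))"
    using sum.shift_bounds_nat_ivl[of "\<lambda>t. ?BD $$ (r,t) * ?BE $$ (t,c)" 0 "b*L" L]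
    by (simp add: add.commute lessThan_atLeast0)
  also have "\<dots> = (\<Sum>s<L. D b $$ (r mod L, s) * (if b = c div L then E b $$ (s, c mod L) else 0))"
  proof (rule sum.cong)
    fix s assume s: "s \<in> {..<L}"
    then have "\<And>x. (x*L + s) div L = x" "(b*L + s) mod L = s" using L0 by auto
    moreover have "b*L + s < L*J" using s bL by simp
    ultimately show "?BD $$ (r, b*L + s) * ?BE $$ (b*L + s, c)
        = D b $$ (r mod L, s) * (if b = c div L then E b $$ (s, c mod L) else 0)"
      unfolding blockdiag_mat_def using r c rb by simp
  qed simp
  also have "\<dots> = (if b = c div L then (D b * E b) $$ (r mod L, c mod L) else 0)"
  proof (cases "b = c div L")
    case True
    have "(D b * E b) $$ (r mod L, c mod L) = (\<Sum>s<L. D b $$ (r mod L, s) * E b $$ (s, c mod L))"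
      using index_mult_mat_sum[OF D[OF bJ] E[OF bJ]] L0 by simp
    then show ?thesis by (simp only: eqTrueI[OF True] if_True)
  qed simp
  also have "\<dots> = blockdiag_mat L J (\<lambda>b. D b * E b) $$ (r,c)"
    unfolding blockdiag_mat_def using r c rb by simp
  finally show "(?BD * ?BE) $$ (r,c) = blockdiag_mat L J (\<lambda>b. D b * E b) $$ (r,c)" .
qed (simp_all add: blockdiag_mat_def)

lemma blockdiag_mat_one:
  assumes "0 < L"
  shows "blockdiag_mat L J (\<lambda>b. 1\<^sub>m L) = 1\<^sub>m (L*J)"
proof (rule eq_matI)
  fix r c assume "r < dim_row (1\<^sub>m (L*J) :: real mat)" "c < dim_col (1\<^sub>m (L*J) :: real mat)"
  moreover have "r = c \<longleftrightarrow> r div L = c div L \<and> r mod L = c mod L"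
    by (metis div_mult_mod_eq)
  ultimately show "blockdiag_mat L J (\<lambda>b. 1\<^sub>m L) $$ (r,c) = 1\<^sub>m (L*J) $$ (r,c)"
    unfolding blockdiag_mat_def using assms by auto
qed (simp_all add: blockdiag_mat_def)

lemma blockdiag_mat_cong:
  assumes "\<And>b. b < J \<Longrightarrow> D b = E b"
  shows "blockdiag_mat L J D = blockdiag_mat L J E"
proof -
  have "r div L < J" if "r < L*J" for r
    using that by (cases "L = 0") (simp_all add: div_less_iff_less_mult mult.commute)
  then show ?thesis unfolding blockdiag_mat_def using assms by (intro cong_mat refl) simp
qed

lemma blockdiag_mat_invertible:
  assumes L0: "0 < L"
    and D: "\<And>b. b < J \<Longrightarrow> D b \<in> carrier_mat L L"
    and E: "\<And>b. b < J \<Longrightarrow> E b \<in> carrier_mat L L"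
    and DE: "\<And>b. b < J \<Longrightarrow> D b * E b = 1\<^sub>m L" and ED: "\<And>b. b < J \<Longrightarrow> E b * D b = 1\<^sub>m L"
  shows "invertible_mat (blockdiag_mat L J D)"
proof -
  have "blockdiag_mat L J D * blockdiag_mat L J E = blockdiag_mat L J (\<lambda>b. D b * E b)"
    by (rule blockdiag_mat_mult[OF L0 D E])
  also have "\<dots> = blockdiag_mat L J (\<lambda>b. 1\<^sub>m L)" by (rule blockdiag_mat_cong) (rule DE)
  finally have DE': "blockdiag_mat L J D * blockdiag_mat L J E = 1\<^sub>m (L*J)"
    unfolding blockdiag_mat_one[OF L0] .
  have "blockdiag_mat L J E * blockdiag_mat L J D = blockdiag_mat L J (\<lambda>b. E b * D b)"
    by (rule blockdiag_mat_mult[OF L0 E D])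
  also have "\<dots> = blockdiag_mat L J (\<lambda>b. 1\<^sub>m L)" by (rule blockdiag_mat_cong) (rule ED)
  finally have ED': "blockdiag_mat L J E * blockdiag_mat L J D = 1\<^sub>m (L*J)"
    unfolding blockdiag_mat_one[OF L0] .
  have "dim_row (blockdiag_mat L J D) = L*J" "dim_col (blockdiag_mat L J D) = L*J"
    "dim_row (blockdiag_mat L J E) = L*J"
    by (simp_all add: blockdiag_mat_def)
  then show ?thesis unfolding invertible_mat_def inverts_mat_def square_mat.simps
    using DE' ED' by (intro conjI exI[of _ "blockdiag_mat L J E"]) simp_all
qed

subsection \<open>Block unit lower triangular matrices\<close>

definition block_unit_lower_triangular :: "nat \<Rightarrow> nat \<Rightarrow> real mat \<Rightarrow> bool" where
  "block_unit_lower_triangular L n F \<longleftrightarrow> F \<in> carrier_mat n n \<and>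
     (\<forall>t<n. \<forall>c<n. t div L \<le> c div L \<longrightarrow> F $$ (t,c) = (if t = c then 1 else 0))"

lemma right_inverse_block_unit_lower_triangular:
  assumes F: "block_unit_lower_triangular L n F"
    and Z: "Z \<in> carrier_mat n n" and ZF: "Z * F = 1\<^sub>m n"
    and r: "r < n"
  shows "c < n \<Longrightarrow> r div L \<le> c div L \<Longrightarrow> Z $$ (r,c) = (if r = c then 1 else 0)"
proof (induction c rule: measure_induct_rule[of "\<lambda>c. n - c div L"])
  case (less c)
  have Fc: "F \<in> carrier_mat n n"
    and Fd: "\<And>t. t < n \<Longrightarrow> t div L \<le> c div L \<Longrightarrow> F $$ (t,c) = (if t = c then 1 else 0)"
    using F less.prems(1) unfolding block_unit_lower_triangular_def by auto
  have "(Z * F) $$ (r,c) = (\<Sum>t<n. Z $$ (r,t) * F $$ (t,c))"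
    by (rule index_mult_mat_sum[OF Z Fc r less.prems(1)])
  also have "\<dots> = (\<Sum>t<n. Z $$ (r,t) * (if t = c then 1 else 0))"
  proof (rule sum.cong)
    fix t assume "t \<in> {..<n}"
    then have t: "t < n" by simp
    show "Z $$ (r,t) * F $$ (t,c) = Z $$ (r,t) * (if t = c then 1 else 0)"
    proof (cases "t div L \<le> c div L")
      case True then show ?thesis using Fd[OF t] by simp
    next
      case False
      have "t div L \<le> t" by simp
      then have "n - t div L < n - c div L" using False t by linarith
      moreover have "r div L \<le> t div L" using False less.prems(2) by linarith
      ultimately have "Z $$ (r,t) = (if r = t then 1 else 0)" using less.IH t by blast
      moreover have "r \<noteq> t" "c \<noteq> t" using False less.prems(2) by auto
      ultimately show ?thesis by simp
    qed
  qed simp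
  also have "\<dots> = Z $$ (r,c)" using less.prems(1) by (simp add: if_distrib[of "\<lambda>x. _ * x"] cong: if_cong)
  finally show ?case using ZF r less.prems(1) by simp
qed

lemma det_block_unit_lower_triangular:
  assumes F: "block_unit_lower_triangular L n F"
  shows "Determinant.det F = 1"
proof -
  have Fc: "F \<in> carrier_mat n n"
    and Fd: "\<And>t c. t < n \<Longrightarrow> c < n \<Longrightarrow> t div L \<le> c div L \<Longrightarrow> F $$ (t,c) = (if t = c then 1 else 0)"
    using F unfolding block_unit_lower_triangular_def by auto
  have "Determinant.det F = prod_list (diag_mat F)"
  proof (rule det_lower_triangular[OF _ Fc])
    fix i j assume "i < j" "j < n"
    then show "F $$ (i,j) = 0" using Fd[of i j] div_le_mono[of i j L] by simp
  qed
  also have "\<dots> = (\<Prod>i = 0..<n. F $$ (i,i))" unfolding prod_list_diag_prod using Fc by simp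
  also have "\<dots> = 1" using Fd by (intro prod.neutral) simp
  finally show ?thesis .
qed

text \<open>Since \<open>X = Q\<^sup>-\<^sup>1\<close>, we have \<open>F G = Q F\<^sup>-\<^sup>T\<close>, and \<open>F\<^sup>-\<^sup>T\<close> is block unit upper triangular.\<close>
lemma mult_inverse_congruence_lower_blocks:
  fixes F X Q G :: "real mat"
  assumes F: "block_unit_lower_triangular L n F"
    and X: "X \<in> carrier_mat n n" and Q: "Q \<in> carrier_mat n n" and G: "G \<in> carrier_mat n n"
    and QX: "Q * X = 1\<^sub>m n"
    and Q_blocks: "\<And>r t. r < n \<Longrightarrow> t < n \<Longrightarrow> r div L \<noteq> t div L \<Longrightarrow> Q $$ (r,t) = 0"
    and inv: "transpose_mat F * X * F * G = 1\<^sub>m n"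
    and r: "r < n" and c: "c < n" and le: "c div L \<le> r div L"
  shows "(F * G) $$ (r,c) = Q $$ (r,c)"
proof -
  have Fc: "F \<in> carrier_mat n n" using F unfolding block_unit_lower_triangular_def by blast
  have FT: "transpose_mat F \<in> carrier_mat n n" using Fc by simp
  define Y where "Y = X * (F * G)"
  have Yc: "Y \<in> carrier_mat n n" unfolding Y_def using X Fc G by auto
  have "transpose_mat F * X * F * G = (transpose_mat F * X) * (F * G)"
    by (rule assoc_mult_mat[OF mult_carrier_mat[OF FT X] Fc G])
  also have "\<dots> = transpose_mat F * Y"
    unfolding Y_def by (rule assoc_mult_mat[OF FT X mult_carrier_mat[OF Fc G]])
  finally have "transpose_mat F * Y = 1\<^sub>m n" using inv by simp
  then have "transpose_mat Y * F = 1\<^sub>m n"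
    using transpose_mult[OF FT Yc] Fc by simp
  then have "transpose_mat Y $$ (c,t) = (if c = t then 1 else 0)" if "t < n" "c div L \<le> t div L" for t
    using right_inverse_block_unit_lower_triangular[OF F _ _ c that(1) that(2)] Yc by simp
  then have Y_upper: "Y $$ (t,c) = (if t = c then 1 else 0)" if "t < n" "c div L \<le> t div L" for t
    using that c Yc by auto
  have "Q * Y = (Q * X) * (F * G)"
    unfolding Y_def by (rule assoc_mult_mat[OF Q X mult_carrier_mat[OF Fc G], symmetric])
  then have "Q * Y = F * G" using QX Fc G by simp
  then have "(F * G) $$ (r,c) = (\<Sum>t<n. Q $$ (r,t) * Y $$ (t,c))"
    using index_mult_mat_sum[OF Q Yc r c] by simp
  also have "\<dots> = (\<Sum>t<n. Q $$ (r,t) * (if t = c then 1 else 0))"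
  proof (rule sum.cong)
    fix t assume "t \<in> {..<n}"
    then have t: "t < n" by simp
    show "Q $$ (r,t) * Y $$ (t,c) = Q $$ (r,t) * (if t = c then 1 else 0)"
      using Q_blocks[OF r t] Y_upper[OF t] le by (cases "r div L = t div L") auto
  qed simp
  also have "\<dots> = Q $$ (r,c)" using c by (simp add: if_distrib[of "\<lambda>x. _ * x"] cong: if_cong)
  finally show ?thesis .
qed

subsection \<open>Kernel blocks of consecutive block indices\<close>

lemma blockrows_atLeastLessThan:
  assumes "1 \<le> a" "a \<le> b"
  shows "blockrows L {a..<b} = [(a-1)*L..<(b-1)*L]"
  using assms(2)
proof (induction b rule: dec_induct)
  case base
  then show ?case by (simp add: blockrows_def)
next
  case (step b)
  have "blockrows L {a..<Suc b} = blockrows L {a..<b} @ [(b-1)*L..<b*L]"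
    using step.hyps by (simp add: blockrows_def)
  also have "\<dots> = [(a-1)*L..<(b-1)*L] @ [(b-1)*L..<b*L]" using step.IH by simp
  also have "\<dots> = [(a-1)*L..<b*L]"
  proof -
    have le: "(a-1)*L \<le> (b-1)*L" using step.hyps by (intro mult_le_mono1 diff_le_mono) simp
    have "b*L = (b-1)*L + L" using assms step.hyps by (cases b) auto
    then show ?thesis using upt_add_eq_append[OF le, of L] by simp
  qed
  finally show ?case by simp
qed

lemma set_blockrows:
  assumes "finite \<phi>" "0 \<notin> \<phi>" "0 < L"
  shows "r \<in> set (blockrows L \<phi>) \<longleftrightarrow> r div L + 1 \<in> \<phi>"
proof -
  have "r \<in> set (blockrows L \<phi>) \<longleftrightarrow> (\<exists>j\<in>\<phi>. (j-1)*L \<le> r \<and> r < j*L)"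
    using assms by (auto simp: blockrows_def)
  also have "\<dots> \<longleftrightarrow> (\<exists>j\<in>\<phi>. r div L + 1 = j)"
  proof -
    have "(j-1)*L \<le> r \<and> r < j*L \<longleftrightarrow> r div L + 1 = j" if "j \<in> \<phi>" for j
      using div_eq_iff_in_block[OF assms(3), of r "j - 1"] that assms(2) by (cases j) auto
    then show ?thesis by blast
  qed
  finally show ?thesis by blast
qed

lemma Kblk_atLeastLessThan:
  assumes "1 \<le> a" "a \<le> b" "1 \<le> c" "c \<le> d"
  shows "Kblk k A L {a..<b} {c..<d} = mat ((b-a)*L) ((d-c)*L)
           (\<lambda>(i,j). k (A ((a-1)*L + i)) (A ((c-1)*L + j)))"
proof -
  have l1: "(b-1)*L - (a-1)*L = (b-a)*L"
    using assms diff_mult_distrib[of "b-1" "a-1" L] by (simp add: diff_diff_left)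
  have l2: "(d-1)*L - (c-1)*L = (d-c)*L"
    using assms diff_mult_distrib[of "d-1" "c-1" L] by (simp add: diff_diff_left)
  have len: "length [(a-1)*L..<(b-1)*L] = (b-a)*L" "length [(c-1)*L..<(d-1)*L] = (d-c)*L"
    by (simp_all only: length_upt l1 l2)
  have "[(a-1)*L..<(b-1)*L] ! i = (a-1)*L + i" if "i < (b-a)*L" for i
    using that l1 by (intro nth_upt) linarith
  moreover have "[(c-1)*L..<(d-1)*L] ! j = (c-1)*L + j" if "j < (d-c)*L" for j
    using that l2 by (intro nth_upt) linarith
  ultimately show ?thesis unfolding Kblk_def blockrows_atLeastLessThan[OF assms(1,2)]
      blockrows_atLeastLessThan[OF assms(3,4)] kmat_def len
    by (intro cong_mat refl) auto
qed

locale consecutive_cpoe =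
  fixes k :: "'a \<Rightarrow> 'a \<Rightarrow> real" and A :: "nat \<Rightarrow> 'a" and J L C :: nat
  assumes k_sym: "\<And>x y. k x y = k y x"
    and L: "L \<ge> 1" and C_pos: "1 \<le> C" and C_le: "C \<le> J"
    and invK: "\<And>j. j \<in> {1..J} \<Longrightarrow> pi_consec C j \<noteq> {} \<Longrightarrow>
                 invertible_mat (Kblk k A L (pi_consec C j) (pi_consec C j))"
    and invQ: "\<And>j. j \<in> {1..J} \<Longrightarrow> invertible_mat (Qj k A L (pi_consec C) j)"
begin

text \<open>Block \<open>a\<close> occupies the rows \<open>(a - 1) L ..< a L\<close>; the blocks \<open>\<pi>(a)\<close> occupy the
  \<open>pred_dim a\<close> rows directly above, starting at row \<open>pred_lo a\<close>.\<close>
definition pred_lo :: "nat \<Rightarrow> nat" where "pred_lo a = (a - Ij C a - 1) * L"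
definition pred_dim :: "nat \<Rightarrow> nat" where "pred_dim a = Ij C a * L"

lemma L_pos: "0 < L" using L by simp

lemma Ij_le: "Ij C a \<le> a - 1" unfolding Ij_def by simp

lemma pred_lo_add_dim: "pred_lo a + pred_dim a = (a - 1) * L"
proof -
  have "a - Ij C a - 1 + Ij C a = a - 1" using Ij_le[of a] by simp
  then show ?thesis unfolding pred_lo_def pred_dim_def by (metis add_mult_distrib)
qed

abbreviation "KaP a \<equiv> Kblk k A L {a} (pi_consec C a)"
abbreviation "KPP a \<equiv> Kblk k A L (pi_consec C a) (pi_consec C a)"
abbreviation "KPa a \<equiv> Kblk k A L (pi_consec C a) {a}"
abbreviation "Kaa a \<equiv> Kblk k A L {a} {a}"
abbreviation "Fa a \<equiv> Fj k A L (pi_consec C) a"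
abbreviation "Qa a \<equiv> Qj k A L (pi_consec C) a"

lemma Kblk_pred:
  assumes "1 \<le> a"
  shows "KaP a = mat L (pred_dim a) (\<lambda>(i,j). k (A ((a-1)*L + i)) (A (pred_lo a + j)))"
    and "KPP a = mat (pred_dim a) (pred_dim a) (\<lambda>(i,j). k (A (pred_lo a + i)) (A (pred_lo a + j)))"
    and "KPa a = mat (pred_dim a) L (\<lambda>(i,j). k (A (pred_lo a + i)) (A ((a-1)*L + j)))"
    and "Kaa a = mat L L (\<lambda>(i,j). k (A ((a-1)*L + i)) (A ((a-1)*L + j)))"
proof -
  have s: "{a} = {a..<a+1}" by auto
  have p: "pi_consec C a = {a - Ij C a ..< a}" unfolding pi_consec_def ..
  have i1: "1 \<le> a - Ij C a" using Ij_le[of a] assms by simp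
  have i2: "a - Ij C a \<le> a" and a2: "a \<le> a + 1" by simp_all
  have d: "a - (a - Ij C a) = Ij C a" using Ij_le[of a] assms by simp
  have l: "(a - Ij C a - 1) * L = pred_lo a" unfolding pred_lo_def ..
  note K = Kblk_atLeastLessThan[of _ _ _ _ k A L]
  show "KaP a = mat L (pred_dim a) (\<lambda>(i,j). k (A ((a-1)*L + i)) (A (pred_lo a + j)))"
    unfolding s p K[OF assms a2 i1 i2] d l pred_dim_def by simp
  show "KPP a = mat (pred_dim a) (pred_dim a) (\<lambda>(i,j). k (A (pred_lo a + i)) (A (pred_lo a + j)))"
    unfolding p K[OF i1 i2 i1 i2] d l pred_dim_def by simp
  show "KPa a = mat (pred_dim a) L (\<lambda>(i,j). k (A (pred_lo a + i)) (A ((a-1)*L + j)))"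
    unfolding s p K[OF i1 i2 assms a2] d l pred_dim_def by simp
  show "Kaa a = mat L L (\<lambda>(i,j). k (A ((a-1)*L + i)) (A ((a-1)*L + j)))"
    unfolding s K[OF assms a2 assms a2] by simp
qed

lemma KPP_invertible:
  assumes a: "a \<in> {1..J}"
  shows "invertible_mat (KPP a)"
proof (cases "pi_consec C a = {}")
  case False then show ?thesis using invK[OF a] by blast
next
  case True
  then have "pred_dim a = 0" unfolding pi_consec_def pred_dim_def using Ij_le[of a] a by auto
  then have c: "KPP a \<in> carrier_mat 0 0" using Kblk_pred(2)[of a] a by simp
  have "KPP a * KPP a = 1\<^sub>m 0" by (rule eq_matI) (use c in auto)
  then show ?thesis unfolding invertible_mat_def inverts_mat_def using c by auto
qed

lemma block_carriers:
  assumes a: "a \<in> {1..J}"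
  shows "KaP a \<in> carrier_mat L (pred_dim a)" "KPP a \<in> carrier_mat (pred_dim a) (pred_dim a)"
    "KPa a \<in> carrier_mat (pred_dim a) L" "Kaa a \<in> carrier_mat L L"
    "Fa a \<in> carrier_mat L (pred_dim a)" "Qa a \<in> carrier_mat L L"
proof -
  have a1: "1 \<le> a" using a by simp
  show K: "KaP a \<in> carrier_mat L (pred_dim a)" "KPP a \<in> carrier_mat (pred_dim a) (pred_dim a)"
    "KPa a \<in> carrier_mat (pred_dim a) L" "Kaa a \<in> carrier_mat L L"
    unfolding Kblk_pred[OF a1] by simp_all
  note Ki = minv_carrier_inverse[OF K(2) KPP_invertible[OF a]]
  show "Fa a \<in> carrier_mat L (pred_dim a)" unfolding Fj_def using K Ki by auto
  show "Qa a \<in> carrier_mat L L" unfolding Qj_def using K Ki by auto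
qed

lemma Fa_mult_KPP:
  assumes a: "a \<in> {1..J}"
  shows "Fa a * KPP a = KaP a"
proof -
  note c = block_carriers[OF a]
  note Ki = minv_carrier_inverse[OF c(2) KPP_invertible[OF a]]
  have "Fa a * KPP a = KaP a * (minv (KPP a) * KPP a)"
    unfolding Fj_def by (rule assoc_mult_mat[OF c(1) Ki(1) c(2)])
  then show ?thesis using c Ki by simp
qed

lemma Qa_add_Fa_mult_KPa:
  assumes a: "a \<in> {1..J}" and "i < L" "j < L"
  shows "Qa a $$ (i,j) + (Fa a * KPa a) $$ (i,j) = Kaa a $$ (i,j)"
proof -
  have "Qa a = Kaa a - Fa a * KPa a" unfolding Qj_def Fj_def ..
  moreover have "Fa a * KPa a \<in> carrier_mat L L" using block_carriers(3,5)[OF a] by simp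
  ultimately show ?thesis using assms(2,3) by (simp del: index_mult_mat add: index_minus_mat(1))
qed

abbreviation "FM \<equiv> Fmat k A L J (pi_consec C)"
abbreviation "QM \<equiv> Qmat k A L J (pi_consec C)"
abbreviation "SM \<equiv> Smat k A L J (pi_consec C)"

lemma pred_block_iff_rows:
  assumes a: "1 \<le> a"
  shows "t div L + 1 \<in> pi_consec C a \<longleftrightarrow> pred_lo a \<le> t \<and> t < pred_lo a + pred_dim a"
proof -
  have "a - Ij C a \<le> t div L + 1 \<longleftrightarrow> a - Ij C a - 1 \<le> t div L" using Ij_le[of a] a by auto
  moreover have "t div L + 1 < a \<longleftrightarrow> t div L < a - 1" by auto
  ultimately show ?thesis unfolding pi_consec_def pred_lo_add_dim atLeastLessThan_iff pred_lo_def
    using less_eq_div_iff_mult_less_eq[OF L_pos, of "a - Ij C a - 1" t]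
      div_less_iff_less_mult[OF L_pos, of t "a - 1"] pred_lo_add_dim[of a, unfolded pred_lo_def]
    by simp
qed

lemma pred_block_offset:
  assumes a1: "1 \<le> a" and t: "t div L + 1 \<in> pi_consec C a"
  shows "card {i \<in> pi_consec C a. i < t div L + 1} * L + t mod L = t - pred_lo a"
proof -
  have ge: "a - Ij C a \<le> t div L + 1" and lt: "t div L + 1 < a"
    using t unfolding pi_consec_def by simp_all
  then have "{i \<in> pi_consec C a. i < t div L + 1} = {a - Ij C a ..< t div L + 1}"
    unfolding pi_consec_def by auto
  moreover have "1 \<le> a - Ij C a" using Ij_le[of a] a1 by simp
  ultimately have "card {i \<in> pi_consec C a. i < t div L + 1} = t div L - (a - Ij C a - 1)"
    using ge by simp
  moreover have "a - Ij C a - 1 \<le> t div L" using ge by linarith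
  then have "(a - Ij C a - 1) * L \<le> t div L * L" by (rule mult_le_mono1)
  ultimately show ?thesis unfolding pred_lo_def diff_mult_distrib
    using div_mult_mod_eq[of t L] by (simp add: diff_mult_distrib)
qed

lemma FM_entry:
  assumes r: "r < L*J" and t: "t < L*J"
  defines "a \<equiv> r div L + 1"
  shows "FM $$ (r,t) = (if t = r then 1 else 0)
      - (if pred_lo a \<le> t \<and> t < pred_lo a + pred_dim a then Fa a $$ (r mod L, t - pred_lo a) else 0)"
proof -
  have a1: "1 \<le> a" unfolding a_def by simp
  have hi: "pred_lo a + pred_dim a = (r div L) * L" unfolding pred_lo_add_dim a_def by simp
  have ent: "FM $$ (r,t) = (if a = t div L + 1 then (if r = t then 1 else 0)
      else if t div L + 1 \<in> pi_consec C a then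
        - (Fa a $$ (r mod L, card {i \<in> pi_consec C a. i < t div L + 1} * L + t mod L))
      else 0)"
    unfolding Fmat_def a_def using r t by (simp add: Let_def)
  show ?thesis
  proof (cases "t div L = r div L")
    case True
    have "\<not> t < pred_lo a + pred_dim a" unfolding hi using True
      by (metis div_mult_mod_eq le_add1 not_less)
    then show ?thesis unfolding ent using True a_def by auto
  next
    case False
    then have tr: "t \<noteq> r" by auto
    show ?thesis
    proof (cases "t div L + 1 \<in> pi_consec C a")
      case True
      then have "pred_lo a \<le> t" "t < pred_lo a + pred_dim a" using pred_block_iff_rows[OF a1] by auto
      moreover note pred_block_offset[OF a1 True]
      ultimately show ?thesis unfolding ent using False True tr a_def by simp
    next
      case False2: False
      then have "\<not> (pred_lo a \<le> t \<and> t < pred_lo a + pred_dim a)"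
        using pred_block_iff_rows[OF a1] by auto
      then show ?thesis unfolding ent using False False2 tr a_def by auto
    qed
  qed
qed

lemma FM_row_sum:
  assumes r: "r < L*J"
  defines "a \<equiv> r div L + 1"
  shows "(\<Sum>t<L*J. FM $$ (r,t) * g t)
     = g r - (\<Sum>s<pred_dim a. Fa a $$ (r mod L, s) * g (pred_lo a + s))"
proof -
  let ?in = "\<lambda>t. pred_lo a \<le> t \<and> t < pred_lo a + pred_dim a"
  have "pred_lo a + pred_dim a = (r div L) * L" unfolding pred_lo_add_dim a_def by simp
  then have hin: "pred_lo a + pred_dim a \<le> L*J" using r
    by (metis div_mult_mod_eq le_add1 le_trans less_imp_le_nat)
  have "(\<Sum>t<L*J. FM $$ (r,t) * g t) = (\<Sum>t<L*J. (if t = r then g t else 0)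
      - (if ?in t then Fa a $$ (r mod L, t - pred_lo a) * g t else 0))"
    by (rule sum.cong) (simp_all add: FM_entry[OF r] a_def left_diff_distrib)
  also have "\<dots> = g r - (\<Sum>t<L*J. if ?in t then Fa a $$ (r mod L, t - pred_lo a) * g t else 0)"
    using r by (simp add: sum_subtractf)
  also have "(\<Sum>t<L*J. if ?in t then Fa a $$ (r mod L, t - pred_lo a) * g t else 0)
      = (\<Sum>t\<in>{pred_lo a..<pred_lo a + pred_dim a}. Fa a $$ (r mod L, t - pred_lo a) * g t)"
  proof -
    have "{t \<in> {..<L*J}. ?in t} = {pred_lo a..<pred_lo a + pred_dim a}" using hin by auto
    then show ?thesis
      using sum.inter_filter[of "{..<L*J}" "\<lambda>t. Fa a $$ (r mod L, t - pred_lo a) * g t" ?in] by simp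
  qed
  also have "\<dots> = (\<Sum>s<pred_dim a. Fa a $$ (r mod L, s) * g (pred_lo a + s))"
    using sum.shift_bounds_nat_ivl[of "\<lambda>t. Fa a $$ (r mod L, t - pred_lo a) * g t" 0 "pred_lo a" "pred_dim a"]
    by (simp add: lessThan_atLeast0 add.commute)
  finally show ?thesis .
qed

lemma FM_block_unit_lower_triangular: "block_unit_lower_triangular L (L*J) FM"
  unfolding block_unit_lower_triangular_def
proof (intro conjI allI impI)
  show "FM \<in> carrier_mat (L*J) (L*J)" unfolding Fmat_def by (rule mat_carrier)
next
  fix t c assume t: "t < L*J" and c: "c < L*J" and le: "t div L \<le> c div L"
  have "pred_lo (t div L + 1) + pred_dim (t div L + 1) = (t div L) * L" unfolding pred_lo_add_dim by simp
  also have "\<dots> \<le> c div L * L" using le by simp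
  also have "\<dots> \<le> c" by (metis div_mult_mod_eq le_add1)
  finally show "FM $$ (t,c) = (if t = c then 1 else 0)" unfolding FM_entry[OF t c] by auto
qed

lemma FM_carrier: "FM \<in> carrier_mat (L*J) (L*J)"
  using FM_block_unit_lower_triangular unfolding block_unit_lower_triangular_def by blast

lemma QM_eq_blockdiag: "QM = blockdiag_mat L J (\<lambda>b. Qa (b+1))"
  unfolding Qmat_def blockdiag_mat_def by simp

lemma QM_carrier: "QM \<in> carrier_mat (L*J) (L*J)"
  unfolding QM_eq_blockdiag by (rule blockdiag_mat_carrier)

lemma QM_entry: "r < L*J \<Longrightarrow> c < L*J \<Longrightarrow>
   QM $$ (r,c) = (if r div L = c div L then Qa (r div L + 1) $$ (r mod L, c mod L) else 0)"
  unfolding Qmat_def by simp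

lemma QM_inverse:
  "minv QM \<in> carrier_mat (L*J) (L*J)" "QM * minv QM = 1\<^sub>m (L*J)" "minv QM * QM = 1\<^sub>m (L*J)"
proof -
  have Q: "Qa (b+1) \<in> carrier_mat L L" "invertible_mat (Qa (b+1))" if "b < J" for b
    using block_carriers(6)[of "b+1"] invQ[of "b+1"] that by simp_all
  note Qi = minv_carrier_inverse[OF Q]
  have "invertible_mat QM" unfolding QM_eq_blockdiag
    by (rule blockdiag_mat_invertible[OF L_pos, of _ _ "\<lambda>b. minv (Qa (b+1))"]) (use Q Qi in auto)
  from minv_carrier_inverse[OF QM_carrier this]
  show "minv QM \<in> carrier_mat (L*J) (L*J)" "QM * minv QM = 1\<^sub>m (L*J)" "minv QM * QM = 1\<^sub>m (L*J)" .
qed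

lemma SM_carrier: "SM \<in> carrier_mat (L*J) (L*J)"
  unfolding Smat_def using FM_carrier QM_inverse(1) by auto

lemma SM_invertible: "invertible_mat SM"
proof -
  note M = QM_inverse(1) and F = FM_carrier and S = SM_carrier
  have FT: "transpose_mat FM \<in> carrier_mat (L*J) (L*J)" using F by simp
  have "Determinant.det (minv QM) * Determinant.det QM = 1"
    using det_mult[OF M QM_carrier] QM_inverse(3) by simp
  then have "Determinant.det (minv QM) \<noteq> 0" by auto
  moreover have "Determinant.det SM = Determinant.det (minv QM)"
    unfolding Smat_def det_mult[OF mult_carrier_mat[OF FT M] F] det_mult[OF FT M]
      det_transpose[OF F] det_block_unit_lower_triangular[OF FM_block_unit_lower_triangular]
    by simp
  ultimately have "Determinant.det SM \<noteq> 0" by simp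
  from det_non_zero_imp_unit[OF S this]
  obtain X where "X \<in> carrier_mat (L*J) (L*J)" "X * SM = 1\<^sub>m (L*J)" "SM * X = 1\<^sub>m (L*J)"
    unfolding Units_def ring_mat_simps by auto
  then show ?thesis unfolding invertible_mat_def inverts_mat_def using S by auto
qed

abbreviation "SG \<equiv> minv SM"

lemma SG_inverse:
  "SG \<in> carrier_mat (L*J) (L*J)" "SM * SG = 1\<^sub>m (L*J)" "SG * SM = 1\<^sub>m (L*J)"
proof -
  from minv_carrier_inverse[OF SM_carrier SM_invertible]
  show "SG \<in> carrier_mat (L*J) (L*J)" "SM * SG = 1\<^sub>m (L*J)" "SG * SM = 1\<^sub>m (L*J)" .
qed

lemma FM_mult_SG_lower:
  assumes "r < L*J" "c < L*J" "c div L \<le> r div L"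
  shows "(FM * SG) $$ (r,c) = QM $$ (r,c)"
proof (rule mult_inverse_congruence_lower_blocks[OF FM_block_unit_lower_triangular QM_inverse(1)
        QM_carrier SG_inverse(1) QM_inverse(2) _ _ assms])
  show "transpose_mat FM * minv QM * FM * SG = 1\<^sub>m (L*J)"
    using SG_inverse(2) by (simp add: Smat_def)
qed (simp add: QM_entry)

lemma FM_mult_SG_transpose_lower:
  assumes r: "r < L*J" and c: "c < L*J" and le: "r div L \<le> c div L"
  shows "(FM * transpose_mat SG) $$ (c,r) = QM $$ (r,c)"
proof -
  note M = QM_inverse(1) and F = FM_carrier and G = SG_inverse(1)
  have FT: "transpose_mat FM \<in> carrier_mat (L*J) (L*J)" using F by simp
  have "transpose_mat SM = transpose_mat FM * transpose_mat (transpose_mat FM * minv QM)"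
    unfolding Smat_def using transpose_mult[OF mult_carrier_mat[OF FT M] F] by simp
  also have "\<dots> = transpose_mat FM * (transpose_mat (minv QM) * FM)"
    using transpose_mult[OF FT M] by simp
  also have "\<dots> = transpose_mat FM * transpose_mat (minv QM) * FM"
    using FT M F by (simp add: assoc_mult_mat)
  finally have "transpose_mat SM = transpose_mat FM * transpose_mat (minv QM) * FM" .
  moreover have "transpose_mat SM * transpose_mat SG = 1\<^sub>m (L*J)"
    using transpose_mult[OF G SM_carrier] SG_inverse(3) by simp
  ultimately have "transpose_mat FM * transpose_mat (minv QM) * FM * transpose_mat SG = 1\<^sub>m (L*J)"
    by simp
  moreover have "transpose_mat QM * transpose_mat (minv QM) = 1\<^sub>m (L*J)"
    using transpose_mult[OF M QM_carrier] QM_inverse(3) by simp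
  ultimately have "(FM * transpose_mat SG) $$ (c,r) = transpose_mat QM $$ (c,r)"
    using mult_inverse_congruence_lower_blocks[OF FM_block_unit_lower_triangular _ _ _ _ _ _ c r le, of
        "transpose_mat (minv QM)" "transpose_mat QM" "transpose_mat SG"] M G QM_carrier
    by (simp add: QM_entry)
  then show ?thesis using r c QM_carrier by simp
qed

subsection \<open>Agreement of the inverse precision matrix with the kernel on the band\<close>

definition band :: "nat \<Rightarrow> nat \<Rightarrow> bool" where
  "band r c \<longleftrightarrow> r < L*J \<and> c < L*J \<and> r div L \<le> c div L + (C - 1) \<and> c div L \<le> r div L + (C - 1)"

lemma band_sym: "band r c \<longleftrightarrow> band c r"
  unfolding band_def by auto

lemma block_index_facts:
  assumes r: "r < L*J"
  defines "h \<equiv> r div L"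
  shows "h + 1 \<in> {1..J}" "h * L + r mod L = r"
    "pred_lo (h + 1) = (h - min h (C - 1)) * L" "pred_lo (h + 1) + pred_dim (h + 1) = h * L"
proof -
  have "h < J" using r L_pos unfolding h_def by (simp add: div_less_iff_less_mult mult.commute)
  then show "h + 1 \<in> {1..J}" by simp
  show "h * L + r mod L = r" unfolding h_def by simp
  show "pred_lo (h + 1) = (h - min h (C - 1)) * L" unfolding pred_lo_def Ij_def by simp
  show "pred_lo (h + 1) + pred_dim (h + 1) = h * L" unfolding pred_lo_add_dim by simp
qed

lemma pred_rows_blocks:
  assumes "pred_lo (h + 1) \<le> t" "t < pred_lo (h + 1) + pred_dim (h + 1)"
  shows "h - min h (C - 1) \<le> t div L" "t div L < h"
proof -
  have "pred_lo (h + 1) = (h - min h (C - 1)) * L" unfolding pred_lo_def Ij_def by simp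
  then show "h - min h (C - 1) \<le> t div L"
    using assms(1) less_eq_div_iff_mult_less_eq[OF L_pos] by simp
  have "pred_lo (h + 1) + pred_dim (h + 1) = h * L" unfolding pred_lo_add_dim by simp
  then show "t div L < h" using assms(2) div_less_iff_less_mult[OF L_pos] by simp
qed

lemma band_below_diagonal_step:
  assumes IH: "\<And>r' c'. band r' c' \<Longrightarrow> max (r' div L) (c' div L) < h \<Longrightarrow> G $$ (r',c') = k (A r') (A c')"
    and G: "G \<in> carrier_mat (L*J) (L*J)" and FG: "(FM * G) $$ (r,c) = 0"
    and b: "band r c" and rh: "r div L = h" and ch: "c div L < h"
  shows "G $$ (r,c) = k (A r) (A c)"
proof -
  have r: "r < L*J" and c: "c < L*J" using b unfolding band_def by auto
  define a where "a = h + 1"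
  note blk = block_index_facts[OF r, unfolded rh a_def[symmetric]]
  have a1: "1 \<le> a" using blk(1) by simp
  have "(FM * G) $$ (r,c) = (\<Sum>t<L*J. FM $$ (r,t) * G $$ (t,c))"
    by (rule index_mult_mat_sum[OF FM_carrier G r c])
  then have rec: "G $$ (r,c) = (\<Sum>s<pred_dim a. Fa a $$ (r mod L, s) * G $$ (pred_lo a + s, c))"
    using FG FM_row_sum[OF r, of "\<lambda>t. G $$ (t,c)"] rh a_def by simp
  have cd: "h - min h (C - 1) \<le> c div L" using b rh unfolding band_def by linarith
  have clo: "pred_lo a \<le> c"
    using blk(3) mult_le_mono1[OF cd, of L] div_mult_mod_eq[of c L] by linarith
  have chi: "c < pred_lo a + pred_dim a" using blk(4) ch div_less_iff_less_mult[OF L_pos] by simp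
  have "(\<Sum>s<pred_dim a. Fa a $$ (r mod L, s) * G $$ (pred_lo a + s, c))
      = (\<Sum>s<pred_dim a. Fa a $$ (r mod L, s) * KPP a $$ (s, c - pred_lo a))"
  proof (rule sum.cong)
    fix s assume "s \<in> {..<pred_dim a}"
    then have s: "s < pred_dim a" by simp
    have tb: "h - min h (C - 1) \<le> (pred_lo a + s) div L" "(pred_lo a + s) div L < h"
      using pred_rows_blocks[of h "pred_lo a + s", folded a_def] s by simp_all
    have "pred_lo a + s < L*J" using s blk(4) blk(2) r by linarith
    then have "band (pred_lo a + s) c" unfolding band_def using tb cd ch c by linarith
    moreover have "max ((pred_lo a + s) div L) (c div L) < h" using tb s ch by simp
    ultimately have "G $$ (pred_lo a + s, c) = k (A (pred_lo a + s)) (A c)" using IH by blast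
    also have "\<dots> = KPP a $$ (s, c - pred_lo a)" unfolding Kblk_pred(2)[OF a1] using s clo chi by simp
    finally show "Fa a $$ (r mod L, s) * G $$ (pred_lo a + s, c)
        = Fa a $$ (r mod L, s) * KPP a $$ (s, c - pred_lo a)" by simp
  qed simp
  also have "\<dots> = (Fa a * KPP a) $$ (r mod L, c - pred_lo a)"
    using index_mult_mat_sum[OF block_carriers(5,2)[OF blk(1)]] clo chi L_pos by simp
  also have "\<dots> = k (A r) (A c)"
    unfolding Fa_mult_KPP[OF blk(1)] Kblk_pred(1)[OF a1] using L_pos clo chi blk(2) a_def by simp
  finally show ?thesis using rec by simp
qed

lemma band_diagonal_step:
  assumes above: "\<And>t. band t c \<Longrightarrow> t div L < c div L \<Longrightarrow> SG $$ (t,c) = k (A t) (A c)"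
    and r: "r < L*J" and c: "c < L*J" and rc: "r div L = c div L"
  shows "SG $$ (r,c) = k (A r) (A c)"
proof -
  define h where "h = r div L"
  define a where "a = h + 1"
  note blk = block_index_facts[OF r, folded h_def a_def]
  have a1: "1 \<le> a" using blk(1) by simp
  have ch: "c div L = h" using rc h_def by simp
  have "(FM * SG) $$ (r,c) = (\<Sum>t<L*J. FM $$ (r,t) * SG $$ (t,c))"
    by (rule index_mult_mat_sum[OF FM_carrier SG_inverse(1) r c])
  also have "\<dots> = SG $$ (r,c) - (\<Sum>s<pred_dim a. Fa a $$ (r mod L, s) * SG $$ (pred_lo a + s, c))"
    unfolding a_def h_def by (rule FM_row_sum[OF r])
  finally have rec: "SG $$ (r,c) = Qa a $$ (r mod L, c mod L)
      + (\<Sum>s<pred_dim a. Fa a $$ (r mod L, s) * SG $$ (pred_lo a + s, c))"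
    using FM_mult_SG_lower[OF r c] QM_entry[OF r c] rc unfolding a_def h_def by simp
  have "(\<Sum>s<pred_dim a. Fa a $$ (r mod L, s) * SG $$ (pred_lo a + s, c))
      = (\<Sum>s<pred_dim a. Fa a $$ (r mod L, s) * KPa a $$ (s, c mod L))"
  proof (rule sum.cong)
    fix s assume "s \<in> {..<pred_dim a}"
    then have s: "s < pred_dim a" by simp
    have tb: "h - min h (C - 1) \<le> (pred_lo a + s) div L" "(pred_lo a + s) div L < h"
      using pred_rows_blocks[of h "pred_lo a + s", folded a_def] s by simp_all
    have "pred_lo a + s < L*J" using s blk(4) blk(2) r by linarith
    then have "band (pred_lo a + s) c" unfolding band_def using tb c ch by linarith
    then have "SG $$ (pred_lo a + s, c) = k (A (pred_lo a + s)) (A c)"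
      using above tb(2) ch by blast
    also have "\<dots> = KPa a $$ (s, c mod L)"
      unfolding Kblk_pred(3)[OF a1] using s L_pos block_index_facts(2)[OF c] ch a_def by simp
    finally show "Fa a $$ (r mod L, s) * SG $$ (pred_lo a + s, c)
        = Fa a $$ (r mod L, s) * KPa a $$ (s, c mod L)" by simp
  qed simp
  also have "\<dots> = (Fa a * KPa a) $$ (r mod L, c mod L)"
    using index_mult_mat_sum[OF block_carriers(5,3)[OF blk(1)]] L_pos by simp
  finally have "SG $$ (r,c) = Qa a $$ (r mod L, c mod L) + (Fa a * KPa a) $$ (r mod L, c mod L)"
    using rec by simp
  also have "\<dots> = Kaa a $$ (r mod L, c mod L)"
    using Qa_add_Fa_mult_KPa[OF blk(1)] L_pos by simp
  also have "\<dots> = k (A r) (A c)"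
    unfolding Kblk_pred(4)[OF a1] using L_pos blk(2) block_index_facts(2)[OF c] ch a_def by simp
  finally show ?thesis .
qed

lemma SG_below_diagonal_step:
  assumes IH: "\<And>r' c'. band r' c' \<Longrightarrow> max (r' div L) (c' div L) < h \<Longrightarrow> SG $$ (r',c') = k (A r') (A c')"
    and b: "band r c" and rh: "r div L = h" and ch: "c div L < h"
  shows "SG $$ (r,c) = k (A r) (A c)"
proof (rule band_below_diagonal_step[OF IH SG_inverse(1) _ b rh ch])
  have "r < L*J" "c < L*J" using b unfolding band_def by simp_all
  then show "(FM * SG) $$ (r,c) = 0" using FM_mult_SG_lower[of r c] QM_entry[of r c] rh ch by simp
qed

lemma SG_above_diagonal_step:
  assumes IH: "\<And>r' c'. band r' c' \<Longrightarrow> max (r' div L) (c' div L) < h \<Longrightarrow> SG $$ (r',c') = k (A r') (A c')"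
    and b: "band r c" and rh: "r div L < h" and ch: "c div L = h"
  shows "SG $$ (r,c) = k (A r) (A c)"
proof -
  note G = SG_inverse(1)
  have IHT: "transpose_mat SG $$ (r',c') = k (A r') (A c')"
    if b': "band r' c'" and "max (r' div L) (c' div L) < h" for r' c'
  proof -
    have "band c' r'" using b' band_sym by blast
    moreover have "max (c' div L) (r' div L) < h" using that(2) by (simp add: max.commute)
    ultimately have "SG $$ (c',r') = k (A c') (A r')" by (rule IH)
    then show ?thesis using b' G k_sym[of "A c'" "A r'"] unfolding band_def by simp
  qed
  have r: "r < L*J" and c: "c < L*J" using b unfolding band_def by simp_all
  have "(FM * transpose_mat SG) $$ (c,r) = 0"
    using FM_mult_SG_transpose_lower[OF r c] QM_entry[OF r c] rh ch by simp
  moreover have "band c r" using b band_sym by blast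
  moreover have "transpose_mat SG \<in> carrier_mat (L*J) (L*J)" using G by simp
  ultimately have "transpose_mat SG $$ (c,r) = k (A c) (A r)"
    using band_below_diagonal_step[OF IHT _ _ _ ch rh] by blast
  then show ?thesis using r c G k_sym[of "A c" "A r"] by simp
qed

lemma SG_band_eq_kernel: "band r c \<Longrightarrow> SG $$ (r,c) = k (A r) (A c)"
proof (induction "max (r div L) (c div L)" arbitrary: r c rule: less_induct)
  case (less r c)
  define h where "h = max (r div L) (c div L)"
  have IH: "\<And>r' c'. band r' c' \<Longrightarrow> max (r' div L) (c' div L) < h \<Longrightarrow> SG $$ (r',c') = k (A r') (A c')"
    using less.hyps unfolding h_def by blast
  have r: "r < L*J" and c: "c < L*J" using less.prems unfolding band_def by simp_all
  consider "c div L < r div L" | "r div L < c div L" | "r div L = c div L" by linarith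
  then show ?case
  proof cases
    case 1
    then have rh: "r div L = h" and ch: "c div L < h" unfolding h_def by simp_all
    show ?thesis by (rule SG_below_diagonal_step[OF _ less.prems rh ch]) (rule IH)
  next
    case 2
    then have rh: "r div L < h" and ch: "c div L = h" unfolding h_def by simp_all
    show ?thesis by (rule SG_above_diagonal_step[OF _ less.prems rh ch]) (rule IH)
  next
    case 3
    then have ch: "c div L = h" unfolding h_def by simp
    have above: "SG $$ (t,c) = k (A t) (A c)" if "band t c" "t div L < c div L" for t
      by (rule SG_above_diagonal_step[OF _ that(1) that(2)[unfolded ch] ch]) (rule IH)
    show ?thesis by (rule band_diagonal_step[OF above r c 3])
  qed
qed

lemma KAA_eq: "KAA k A L J = mat (L*J) (L*J) (\<lambda>(r,c). k (A r) (A c))"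
proof -
  have "{1..J} = {1..<J+1}" by auto
  moreover have "1 \<le> J" using C_pos C_le by simp
  ultimately show ?thesis unfolding KAA_def by (simp add: Kblk_atLeastLessThan mult.commute)
qed

lemma psi_window:
  assumes j: "j \<in> {1..J}"
  obtains u where "1 \<le> u" "u + (C - 1) \<le> J" "psi C (pi_consec C) j \<subseteq> {u..u + (C - 1)}"
proof (cases "j < C")
  case True
  then have "pi_consec C j = {1..<j}" unfolding pi_consec_def Ij_def using j by auto
  then have "psi C (pi_consec C) j \<subseteq> {1..1 + (C - 1)}" unfolding psi_def using True C_pos j by auto
  then show ?thesis using that[of 1] C_le C_pos by simp
next
  case False
  then have "pi_consec C j = {j - (C - 1)..<j}" unfolding pi_consec_def Ij_def by simp
  then have "psi C (pi_consec C) j \<subseteq> {j - (C - 1)..j - (C - 1) + (C - 1)}"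
    unfolding psi_def using False C_pos j by auto
  then show ?thesis using that[of "j - (C - 1)"] False C_pos j by simp
qed

lemma rows_in_window_band:
  assumes u: "1 \<le> u" "u + (C - 1) \<le> J"
    and r: "r div L + 1 \<in> {u..u + (C - 1)}" and c: "c div L + 1 \<in> {u..u + (C - 1)}"
  shows "band r c"
proof -
  have "r div L < J" "c div L < J" using r c u by auto
  then have "r < L*J" "c < L*J" using div_less_iff_less_mult[OF L_pos] by (simp_all add: mult.commute)
  then show ?thesis unfolding band_def using r c by auto
qed

lemma SG_subblk_psi_eq_KAA:
  assumes j: "j \<in> {1..J}"
  shows "subblk L (psi C (pi_consec C) j) SG = subblk L (psi C (pi_consec C) j) (KAA k A L J)"
proof -
  obtain u where u: "1 \<le> u" "u + (C - 1) \<le> J" "psi C (pi_consec C) j \<subseteq> {u..u + (C - 1)}"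
    using psi_window[OF j] by blast
  define idx where "idx = blockrows L (psi C (pi_consec C) j)"
  have "finite (psi C (pi_consec C) j)" "0 \<notin> psi C (pi_consec C) j"
    using u(1,3) finite_subset by auto
  then have "r div L + 1 \<in> {u..u + (C - 1)}" if "r \<in> set idx" for r
    using set_blockrows[OF _ _ L_pos, of _ r] that u(3) unfolding idx_def by blast
  then have "band (idx ! x) (idx ! y)" if "x < length idx" "y < length idx" for x y
    using rows_in_window_band[OF u(1,2)] that by simp
  then show ?thesis unfolding subblk_def Let_def idx_def[symmetric] KAA_eq
    by (intro cong_mat refl) (auto simp: SG_band_eq_kernel band_def)
qed

lemma SG_eq_KAA_if_C_eq_J:
  assumes "C = J"
  shows "SG = KAA k A L J"
  unfolding KAA_eq
proof (rule eq_matI)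
  fix r c assume "r < dim_row (mat (L*J) (L*J) (\<lambda>(r,c). k (A r) (A c)))"
    "c < dim_col (mat (L*J) (L*J) (\<lambda>(r,c). k (A r) (A c)))"
  then have "r div L < J" "c div L < J" using L_pos by (simp_all add: div_less_iff_less_mult mult.commute)
  then have "band r c" using rows_in_window_band[of 1 r c] assms by simp
  then show "SG $$ (r,c) = mat (L*J) (L*J) (\<lambda>(r,c). k (A r) (A c)) $$ (r,c)"
    by (simp add: SG_band_eq_kernel band_def)
qed (use SG_inverse(1) in auto)

end

theorem mainTheorem11:
  fixes k :: "real^'d \<Rightarrow> real^'d \<Rightarrow> real"
    and A :: "nat \<Rightarrow> real^'d"
    and J L C :: nat
  assumes pd: "pos_def_kernel k"
    and J: "J \<ge> 1" and L: "L \<ge> 1"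
    and C: "C \<in> {1..J}"
    and invK: "\<And>j. j \<in> {1..J} \<Longrightarrow> pi_consec C j \<noteq> {} \<Longrightarrow>
                 invertible_mat (Kblk k A L (pi_consec C j) (pi_consec C j))"
    and invQ: "\<And>j. j \<in> {1..J} \<Longrightarrow> invertible_mat (Qj k A L (pi_consec C) j)"
  shows "(\<forall>j \<in> {1..J}.
            subblk L (psi C (pi_consec C) j) (minv (Smat k A L J (pi_consec C)))
          = subblk L (psi C (pi_consec C) j) (KAA k A L J))
       \<and> (C = J \<longrightarrow> minv (Smat k A L J (pi_consec C)) = KAA k A L J)"
proof -
  have "\<And>x y. k x y = k y x" using pd unfolding pos_def_kernel_def by blast
  then interpret consecutive_cpoe k A J L C
    using L C invK invQ by unfold_locales auto
  show ?thesis using SG_subblk_psi_eq_KAA SG_eq_KAA_if_C_eq_J by blast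
qed

end
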